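(* Let $B$ be a C*-algebra and let $A$ be a regular subalgebra of $B$ satisfying the ideal intersection property. Let $\mathscr{R}(B)$ be the family of all regular ideals of $B$, and $\mathscr{R}'_{\mathrm{inv}}(A)$ the family of all regular, normalizer-invariant ideals of $A$. Then the map $$\alpha: J\in\mathscr{R}(B)\mapsto J\cap A\in\mathscr{R}'_{\mathrm{inv}}(A)$$ is well defined and is a boolean algebra isomorphism (an inclusion-preserving bijection with inclusion-preserving inverse), with inverse $$\beta: I\in\mathscr{R}'_{\mathrm{inv}}(A)\mapsto \mathrm{Ann}_B(\mathrm{Ann}_B(I))\in\mathscr{R}(B).$$
   Context: Ideals are closed two-sided ideals. $A\subseteq B$ is a closed *-subalgebra. A normalizer of $A$ in $B$ is $n\in B$ with $n^*An\subseteq A$ and $nAn^*\subseteq A$; $A$ is a regular subalgebra if the normalizers span a dense subspace of $B$ and $A$ contains an approximate unit for $B$. A subset $S\subseteq A$ is normalizer-invariant if $nSn^*\subseteq S$ for every normalizer $n$. For a C*-algebra $C$ and $S\subseteq C$ with $[SC]=[CS]$ ($[\cdot]$ = closed linear span), $\{x\in C: xs=0\ \forall s\in S\}=\{x\in C: sx=0\ \forall s\in S\}$, denoted $\mathrm{Ann}_C(S)$; this applies in particular to every ideal of $C$, and (for $C=B$) to every normalizer-invariant ideal of $A$. An ideal $J$ of $C$ is regular if $\mathrm{Ann}_C(\mathrm{Ann}_C(J))=J$. Regular ideals form a boolean algebra ordered by inclusion, with meet $J_1\cap J_2$, join $\mathrm{Ann}_C(\mathrm{Ann}_C(J_1+J_2))$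 and negation $\mathrm{Ann}_C(J)$. $A$ satisfies the ideal intersection property if $J\cap A\neq\{0\}$ for every nonzero ideal $J$ of $B$. *)

theory Defs
  imports "HOL-Analysis.Analysis"
begin

text \<open>A (possibly non-unital) C*-algebra: a real Banach algebra with a compatible
  complex scalar multiplication and an isometric-type involution satisfying the C*-identity.\<close>
class cstar_algebra = real_normed_algebra + banach +
  fixes cscale :: "complex \<Rightarrow> 'a \<Rightarrow> 'a"
    and cstar :: "'a \<Rightarrow> 'a"
  assumes cscale_add_right: "cscale c (x + y) = cscale c x + cscale c y"
    and cscale_add_left: "cscale (c + d) x = cscale c x + cscale d x"
    and cscale_cscale: "cscale c (cscale d x) = cscale (c * d) x"
    and cscale_one: "cscale 1 x = x"
    and cscale_of_real: "cscale (complex_of_real r) x = scaleR r x"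
    and norm_cscale: "norm (cscale c x) = cmod c * norm x"
    and cscale_left_mult: "cscale c x * y = cscale c (x * y)"
    and cscale_right_mult: "x * cscale c y = cscale c (x * y)"
    and cstar_cstar: "cstar (cstar x) = x"
    and cstar_add: "cstar (x + y) = cstar x + cstar y"
    and cstar_cscale: "cstar (cscale c x) = cscale (cnj c) (cstar x)"
    and cstar_mult: "cstar (x * y) = cstar y * cstar x"
    and cstar_identity: "norm (cstar x * x) = norm x * norm x"


definition cspan :: "('a::cstar_algebra) set \<Rightarrow> 'a set" where
  "cspan S = {x. \<exists>F c. finite F \<and> F \<subseteq> S \<and> x = (\<Sum>s\<in>F. cscale (c s) s)}"

definition cstar_subalgebra :: "('a::cstar_algebra) set \<Rightarrow> bool" where
  "cstar_subalgebra A \<longleftrightarrow> closed A \<and> 0 \<in> A \<and>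
     (\<forall>x\<in>A. \<forall>y\<in>A. x + y \<in> A \<and> x * y \<in> A) \<and>
     (\<forall>c. \<forall>x\<in>A. cscale c x \<in> A) \<and> (\<forall>x\<in>A. cstar x \<in> A)"

definition ideal_of :: "('a::cstar_algebra) set \<Rightarrow> ('a::cstar_algebra) set \<Rightarrow> bool" where
  "ideal_of C J \<longleftrightarrow> J \<subseteq> C \<and> closed J \<and> 0 \<in> J \<and>
     (\<forall>x\<in>J. \<forall>y\<in>J. x + y \<in> J) \<and> (\<forall>c. \<forall>x\<in>J. cscale c x \<in> J) \<and>
     (\<forall>c\<in>C. \<forall>x\<in>J. c * x \<in> J \<and> x * c \<in> J)"

definition Ann :: "('a::cstar_algebra) set \<Rightarrow> ('a::cstar_algebra) set \<Rightarrow> 'a set" where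
  "Ann C S = {x \<in> C. \<forall>s\<in>S. x * s = 0}"

definition regular_ideal :: "('a::cstar_algebra) set \<Rightarrow> ('a::cstar_algebra) set \<Rightarrow> bool" where
  "regular_ideal C J \<longleftrightarrow> ideal_of C J \<and> Ann C (Ann C J) = J"

definition normalizer :: "('a::cstar_algebra) set \<Rightarrow> ('a::cstar_algebra) set \<Rightarrow> 'a \<Rightarrow> bool" where
  "normalizer A B n \<longleftrightarrow> n \<in> B \<and> (\<forall>a\<in>A. cstar n * a * n \<in> A \<and> n * a * cstar n \<in> A)"

definition normalizer_invariant :: "('a::cstar_algebra) set \<Rightarrow> ('a::cstar_algebra) set \<Rightarrow> ('a::cstar_algebra) set \<Rightarrow> bool" where
  "normalizer_invariant A B S \<longleftrightarrow> (\<forall>n. normalizer A B n \<longrightarrow> (\<forall>s\<in>S. n * s * cstar n \<in> S))"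

definition positive :: "('a::cstar_algebra) \<Rightarrow> bool" where
  "positive e \<longleftrightarrow> (\<exists>x. e = cstar x * x)"

text \<open>A contains an approximate unit for B: a net (here: a proper filter on the
  algebra, i.e. the push-forward of a net) of positive contractions in A with
  e b \<rightarrow> b and b e \<rightarrow> b for all b in B.\<close>
definition contains_approx_unit :: "('a::cstar_algebra) set \<Rightarrow> ('a::cstar_algebra) set \<Rightarrow> bool" where
  "contains_approx_unit A B \<longleftrightarrow> (\<exists>F :: 'a filter. F \<noteq> bot \<and>
     eventually (\<lambda>e. e \<in> A \<and> positive e \<and> norm e \<le> 1) F \<and>
     (\<forall>b\<in>B. ((\<lambda>e. e * b) \<longlongrightarrow> b) F \<and> ((\<lambda>e. b * e) \<longlongrightarrow> b) F))"

definition regular_subalgebra :: "('a::cstar_algebra) set \<Rightarrow> ('a::cstar_algebra) set \<Rightarrow> bool" where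
  "regular_subalgebra A B \<longleftrightarrow> cstar_subalgebra A \<and> A \<subseteq> B \<and>
     closure (cspan {n. normalizer A B n}) = B \<and> contains_approx_unit A B"

definition ideal_intersection_property :: "('a::cstar_algebra) set \<Rightarrow> ('a::cstar_algebra) set \<Rightarrow> bool" where
  "ideal_intersection_property A B \<longleftrightarrow>
     (\<forall>J. ideal_of B J \<and> J \<noteq> {0} \<longrightarrow> J \<inter> A \<noteq> {0})"

end

theory Submission
  imports Defs
begin

text \<open>By the C*-identity, \<open>x\<^sup>* x = 0\<close> forces \<open>x = 0\<close>. Hence the annihilator of an ideal of \<open>B\<close>
  is two-sided, \<open>J \<subseteq> Ann(Ann J)\<close>, and every annihilator of an ideal is a regular ideal.
  For a normalizer-invariant ideal \<open>I\<close> of \<open>A\<close>, \<open>Ann\<^sub>B(I)\<close> is an ideal of \<open>B\<close>: for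
  \<open>x \<in> Ann\<^sub>B(I)\<close>, \<open>i \<in> I\<close> and a normalizer \<open>n\<close> one has
  \<open>(x n i)(x n i)\<^sup>* = x (n i i\<^sup>* n\<^sup>*) x\<^sup>* = 0\<close>, and the normalizers span a dense subspace.
  With the ideal intersection property this yields \<open>Ann\<^sub>B(J \<inter> A) = Ann\<^sub>B(J)\<close> for every ideal
  \<open>J\<close> of \<open>B\<close>, because the ideal \<open>Ann\<^sub>B(J \<inter> A) \<inter> J\<close> meets \<open>A\<close> only in \<open>0\<close>.
  Applied to \<open>J\<close> and to \<open>Ann\<^sub>B(J)\<close>, this identity shows that \<open>J \<mapsto> J \<inter> A\<close> and
  \<open>I \<mapsto> Ann\<^sub>B(Ann\<^sub>B(I))\<close> are mutually inverse.\<close>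

lemma cscale_zero_right [simp]: "cscale c (0::'a::cstar_algebra) = 0"
  using cscale_add_right[of c 0 0] by simp

lemma cstar_zero [simp]: "cstar (0::'a::cstar_algebra) = 0"
  using cstar_add[of 0 0] by simp

lemma cstar_mult_self_eq_zero_iff [simp]: "cstar x * x = 0 \<longleftrightarrow> (x::'a::cstar_algebra) = 0"
  using cstar_identity[of x] by auto

lemma mult_cstar_self_eq_zero_iff [simp]: "x * cstar x = 0 \<longleftrightarrow> (x::'a::cstar_algebra) = 0"
  using cstar_mult_self_eq_zero_iff[of "cstar x"] by (metis cstar_cstar cstar_zero)

lemma mult_cstar_mult_self_eq_zero:
  assumes "x * (cstar x * x) = (0::'a::cstar_algebra)"
  shows "x = 0"
proof -
  let ?p = "cstar x * x"
  have "cstar ?p * ?p = 0"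
    using assms by (simp add: cstar_mult cstar_cstar mult.assoc)
  then show ?thesis by simp
qed

lemma Ann_antimono: "S \<subseteq> T \<Longrightarrow> Ann C T \<subseteq> Ann C S"
  unfolding Ann_def by auto

lemma Ann_eq_Int_Ann_UNIV: "Ann C S = C \<inter> Ann UNIV S"
  unfolding Ann_def by auto

lemma closed_Ann_UNIV: "closed (Ann UNIV (S::'a::cstar_algebra set))"
proof -
  have "Ann UNIV S = (\<Inter>s\<in>S. {x. x * s = 0})"
    unfolding Ann_def by auto
  moreover have "closed {x. x * s = (0::'a)}" for s
    by (intro closed_Collect_eq continuous_intros)
  ultimately show ?thesis by auto
qed

text \<open>An annihilator is always a closed left ideal, so only right multiplication needs checking.\<close>

lemma ideal_of_UNIV_AnnI:
  fixes S :: "'a::cstar_algebra set"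
  assumes "\<And>x c s. x \<in> Ann UNIV S \<Longrightarrow> s \<in> S \<Longrightarrow> x * c * s = 0"
  shows "ideal_of UNIV (Ann UNIV S)"
  using assms closed_Ann_UNIV
  unfolding ideal_of_def Ann_def by (simp add: distrib_right cscale_left_mult mult.assoc)

lemma ideal_of_Int: "ideal_of C J \<Longrightarrow> ideal_of C K \<Longrightarrow> ideal_of C (J \<inter> K)"
  unfolding ideal_of_def by (auto intro: closed_Int)

lemma ideal_of_UNIV_Ann:
  assumes "ideal_of UNIV (J::'a::cstar_algebra set)"
  shows "ideal_of UNIV (Ann UNIV J)"
proof (rule ideal_of_UNIV_AnnI)
  fix x c s assume "x \<in> Ann UNIV J" "s \<in> J"
  moreover from assms \<open>s \<in> J\<close> have "c * s \<in> J"
    unfolding ideal_of_def by blast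
  ultimately show "x * c * s = 0"
    unfolding Ann_def by (simp add: mult.assoc)
qed

lemma mult_Ann_eq_zero:
  assumes J: "ideal_of UNIV (J::'a::cstar_algebra set)" and "x \<in> Ann UNIV J" and "j \<in> J"
  shows "j * x = 0"
proof (rule mult_cstar_mult_self_eq_zero)
  have "cstar (j * x) * (j * x) \<in> J"
    using J \<open>j \<in> J\<close> unfolding ideal_of_def by blast
  with \<open>x \<in> Ann UNIV J\<close> show "j * x * (cstar (j * x) * (j * x)) = 0"
    unfolding Ann_def by (simp add: mult.assoc)
qed

lemma subset_Ann_Ann:
  assumes "ideal_of UNIV (J::'a::cstar_algebra set)"
  shows "J \<subseteq> Ann UNIV (Ann UNIV J)"
  using mult_Ann_eq_zero[OF assms] unfolding Ann_def[of UNIV "Ann UNIV J"] by auto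

lemma regular_ideal_Ann:
  assumes J: "ideal_of UNIV (J::'a::cstar_algebra set)"
  shows "regular_ideal UNIV (Ann UNIV J)"
proof -
  have M: "ideal_of UNIV (Ann UNIV J)"
    using ideal_of_UNIV_Ann[OF J] .
  have "Ann UNIV (Ann UNIV (Ann UNIV J)) \<subseteq> Ann UNIV J"
    using Ann_antimono[OF subset_Ann_Ann[OF J]] .
  moreover have "Ann UNIV J \<subseteq> Ann UNIV (Ann UNIV (Ann UNIV J))"
    using subset_Ann_Ann[OF M] .
  ultimately show ?thesis
    unfolding regular_ideal_def using M by blast
qed

lemma Ann_Ann_subalgebra_eq:
  "Ann A (Ann A S) = A \<inter> Ann UNIV (Ann UNIV S \<inter> A)"
  by (simp add: Ann_eq_Int_Ann_UNIV[of A] Int_commute)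

lemma ideal_of_Int_subalgebra:
  "cstar_subalgebra A \<Longrightarrow> ideal_of UNIV J \<Longrightarrow> ideal_of A (J \<inter> A)"
  unfolding ideal_of_def cstar_subalgebra_def by (auto intro: closed_Int)

lemma normalizer_invariant_Int:
  "ideal_of UNIV J \<Longrightarrow> normalizer_invariant A UNIV (J \<inter> A)"
  unfolding normalizer_invariant_def normalizer_def ideal_of_def by auto

lemma Ann_mult_normalizer_mult_eq_zero:
  assumes A: "cstar_subalgebra A" and I: "ideal_of A I" and inv: "normalizer_invariant A UNIV I"
    and x: "x \<in> Ann UNIV I" and i: "i \<in> I" and n: "normalizer A UNIV n"
  shows "x * n * i = 0"
proof -
  have "cstar i \<in> A"
    using A I i unfolding ideal_of_def cstar_subalgebra_def by blast
  then have "i * cstar i \<in> I"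
    using I i unfolding ideal_of_def by blast
  then have "n * (i * cstar i) * cstar n \<in> I"
    using inv n unfolding normalizer_invariant_def by blast
  then have "x * (n * (i * cstar i) * cstar n) * cstar x = 0"
    using x unfolding Ann_def by simp
  then have "(x * n * i) * cstar (x * n * i) = 0"
    by (simp add: cstar_mult mult.assoc)
  then show ?thesis by simp
qed

lemma mult_closure_cspan_mult_eq_zero:
  fixes x y :: "'a::cstar_algebra"
  assumes N: "\<And>n. n \<in> N \<Longrightarrow> x * n * y = 0" and b: "b \<in> closure (cspan N)"
  shows "x * b * y = 0"
proof -
  let ?Z = "{b. x * b * y = 0}"
  have "cspan N \<subseteq> ?Z"
  proof
    fix z assume "z \<in> cspan N"
    then obtain F c where "finite F" "F \<subseteq> N" and z: "z = (\<Sum>s\<in>F. cscale (c s) s)"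
      unfolding cspan_def by blast
    have "x * z * y = (\<Sum>s\<in>F. cscale (c s) (x * s * y))"
      unfolding z by (simp add: sum_distrib_left sum_distrib_right cscale_left_mult cscale_right_mult)
    also have "\<dots> = 0"
      using \<open>F \<subseteq> N\<close> N by (intro sum.neutral) auto
    finally show "z \<in> ?Z" by simp
  qed
  moreover have "closed ?Z"
    by (intro closed_Collect_eq continuous_intros)
  ultimately show ?thesis
    using b closure_minimal by blast
qed

lemma Ann_Int_Int_subset_zero:
  assumes A: "cstar_subalgebra A" and J: "ideal_of UNIV J"
  shows "Ann UNIV (J \<inter> A) \<inter> J \<inter> A \<subseteq> {0}"
proof
  fix z assume z: "z \<in> Ann UNIV (J \<inter> A) \<inter> J \<inter> A"
  then have "cstar z * z \<in> J \<inter> A"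
    using A J unfolding cstar_subalgebra_def ideal_of_def by blast
  with z have "z * (cstar z * z) = 0"
    unfolding Ann_def by blast
  then show "z \<in> {0}"
    using mult_cstar_mult_self_eq_zero by blast
qed

context
  fixes A :: "'a::cstar_algebra set"
  assumes A: "cstar_subalgebra A"
    and dense: "closure (cspan {n. normalizer A UNIV n}) = UNIV"
begin

lemma ideal_of_UNIV_Ann_invariant:
  assumes I: "ideal_of A I" and inv: "normalizer_invariant A UNIV I"
  shows "ideal_of UNIV (Ann UNIV I)"
proof (rule ideal_of_UNIV_AnnI)
  fix x c i assume x: "x \<in> Ann UNIV I" and i: "i \<in> I"
  show "x * c * i = 0"
  proof (rule mult_closure_cspan_mult_eq_zero)
    show "c \<in> closure (cspan {n. normalizer A UNIV n})"
      using dense by simp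
  next
    fix n assume "n \<in> {n. normalizer A UNIV n}"
    then show "x * n * i = 0"
      using Ann_mult_normalizer_mult_eq_zero[OF A I inv x i] by simp
  qed
qed

context
  assumes iip: "ideal_intersection_property A UNIV"
begin

lemma Ann_Int_subalgebra_eq:
  assumes J: "ideal_of UNIV J"
  shows "Ann UNIV (J \<inter> A) = Ann UNIV J"
proof
  show "Ann UNIV J \<subseteq> Ann UNIV (J \<inter> A)"
    by (rule Ann_antimono) auto
  let ?L = "Ann UNIV (J \<inter> A)"
  have L: "ideal_of UNIV ?L"
    using ideal_of_UNIV_Ann_invariant ideal_of_Int_subalgebra[OF A J] normalizer_invariant_Int[OF J] .
  have "ideal_of UNIV (?L \<inter> J)" and "0 \<in> ?L \<inter> J \<inter> A"
    using ideal_of_Int[OF L J] A unfolding ideal_of_def cstar_subalgebra_def by auto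
  with Ann_Int_Int_subset_zero[OF A J] iip have LJ: "?L \<inter> J = {0}"
    unfolding ideal_intersection_property_def by blast
  show "?L \<subseteq> Ann UNIV J"
  proof
    fix x assume x: "x \<in> ?L"
    have "x * j \<in> ?L \<inter> J" if "j \<in> J" for j
      using L J x that unfolding ideal_of_def by blast
    with LJ show "x \<in> Ann UNIV J"
      unfolding Ann_def by blast
  qed
qed

lemma Ann_Ann_subalgebra_eq_Ann_Ann_Int:
  assumes "ideal_of UNIV (Ann UNIV S)"
  shows "Ann A (Ann A S) = Ann UNIV (Ann UNIV S) \<inter> A"
  using Ann_Ann_subalgebra_eq[of A S] Ann_Int_subalgebra_eq[OF assms] by auto

lemma regular_ideal_Int_subalgebra:
  assumes "regular_ideal UNIV J"
  shows "regular_ideal A (J \<inter> A)"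
proof -
  have J: "ideal_of UNIV J" and JJ: "Ann UNIV (Ann UNIV J) = J"
    using assms unfolding regular_ideal_def by auto
  have "Ann A (Ann A (J \<inter> A)) = Ann UNIV (Ann UNIV (J \<inter> A)) \<inter> A"
    using Ann_Ann_subalgebra_eq_Ann_Ann_Int ideal_of_UNIV_Ann[OF J] Ann_Int_subalgebra_eq[OF J]
    by simp
  also have "\<dots> = J \<inter> A"
    using Ann_Int_subalgebra_eq[OF J] JJ by simp
  finally show ?thesis
    unfolding regular_ideal_def using ideal_of_Int_subalgebra[OF A J] by simp
qed

lemma Ann_Ann_Int_subalgebra_eq:
  "regular_ideal UNIV J \<Longrightarrow> Ann UNIV (Ann UNIV (J \<inter> A)) = J"
  using Ann_Int_subalgebra_eq unfolding regular_ideal_def by simp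

lemma Ann_Ann_Int_eq_invariant:
  assumes "regular_ideal A I" and "normalizer_invariant A UNIV I"
  shows "Ann UNIV (Ann UNIV I) \<inter> A = I"
  using assms Ann_Ann_subalgebra_eq_Ann_Ann_Int ideal_of_UNIV_Ann_invariant
  unfolding regular_ideal_def by metis

end

end

theorem corollary4p5:
  fixes A :: "'a::cstar_algebra set"
  assumes "regular_subalgebra A UNIV"
    and "ideal_intersection_property A UNIV"
  defines "RB \<equiv> {J. regular_ideal UNIV J}"
    and "RA \<equiv> {I. regular_ideal A I \<and> normalizer_invariant A UNIV I}"
    and "\<alpha> \<equiv> (\<lambda>J. J \<inter> A)"
    and "\<beta> \<equiv> (\<lambda>I. Ann UNIV (Ann UNIV I))"
  shows "\<alpha> ` RB \<subseteq> RA \<and> \<beta> ` RA \<subseteq> RB \<and> bij_betw \<alpha> RB RA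
     \<and> (\<forall>J\<in>RB. \<beta> (\<alpha> J) = J) \<and> (\<forall>I\<in>RA. \<alpha> (\<beta> I) = I)
     \<and> (\<forall>J1\<in>RB. \<forall>J2\<in>RB. J1 \<subseteq> J2 \<longrightarrow> \<alpha> J1 \<subseteq> \<alpha> J2)
     \<and> (\<forall>I1\<in>RA. \<forall>I2\<in>RA. I1 \<subseteq> I2 \<longrightarrow> \<beta> I1 \<subseteq> \<beta> I2)"
proof -
  have A: "cstar_subalgebra A" and dense: "closure (cspan {n. normalizer A UNIV n}) = UNIV"
    using assms(1) unfolding regular_subalgebra_def by auto
  note iip = assms(2)
  have \<alpha>_RB: "\<alpha> ` RB \<subseteq> RA"
    using regular_ideal_Int_subalgebra[OF A dense iip] normalizer_invariant_Int
    unfolding RB_def RA_def \<alpha>_def regular_ideal_def by auto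
  have \<beta>_RA: "\<beta> ` RA \<subseteq> RB"
    using regular_ideal_Ann ideal_of_UNIV_Ann_invariant[OF A dense]
    unfolding RA_def RB_def \<beta>_def regular_ideal_def by auto
  have \<beta>\<alpha>: "\<forall>J\<in>RB. \<beta> (\<alpha> J) = J"
    using Ann_Ann_Int_subalgebra_eq[OF A dense iip] unfolding RB_def \<alpha>_def \<beta>_def by auto
  have \<alpha>\<beta>: "\<forall>I\<in>RA. \<alpha> (\<beta> I) = I"
    using Ann_Ann_Int_eq_invariant[OF A dense iip] unfolding RA_def \<alpha>_def \<beta>_def by auto
  have "bij_betw \<alpha> RB RA"
    using \<beta>\<alpha> \<alpha>\<beta> \<alpha>_RB \<beta>_RA by (rule bij_betw_byWitness)
  moreover have "\<forall>J1\<in>RB. \<forall>J2\<in>RB. J1 \<subseteq> J2 \<longrightarrow> \<alpha> J1 \<subseteq> \<alpha> J2"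
    unfolding \<alpha>_def by auto
  moreover have "\<forall>I1\<in>RA. \<forall>I2\<in>RA. I1 \<subseteq> I2 \<longrightarrow> \<beta> I1 \<subseteq> \<beta> I2"
    unfolding \<beta>_def by (intro ballI impI Ann_antimono)
  ultimately show ?thesis
    using \<alpha>_RB \<beta>_RA \<beta>\<alpha> \<alpha>\<beta> by (intro conjI) assumption+
qed

end
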